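(* Let $(X,d)$ be a Polish length space with a doubling measure $\nu$ satisfying the standing assumptions below, let $\varepsilon>0$, and let $\Omega\subset X$ be a $\nu$-measurable set of finite diameter with $0<\nu(\Omega)<\nu(X)$. Then $(m^{\nu,\varepsilon},\nu)$ satisfies a $p$-Poincaré inequality in $\Omega$ for every $p\ge1$.
   Context: $(X,d)$ is a length space if $d(x,y)$ equals the infimum of lengths of curves joining $x$ and $y$. $\nu$ is doubling if there is $C_d\ge1$ with $0<\nu(B(x,2r))\le C_d\,\nu(B(x,r))<\infty$ for all $x\in X$, $r>0$. The $\varepsilon$-step random walk is $m^{\nu,\varepsilon}_x:=\nu\llcorner B(x,\varepsilon)/\nu(B(x,\varepsilon))$; $\nu$ is invariant and reversible for it. Standing assumptions: $\nu(X)<\infty$ and $\nu$ is ergodic for $m=m^{\nu,\varepsilon}$ (every Borel $B$ with $m_x(B)=1$ for all $x\in B$ has $\nu(B)\in\{0,\nu(X)\}$). $\partial_m\Omega:=\{x\in X\setminus\Omega: m_x(\Omega)>0\}$, $\Omega_m:=\Omega\cup\partial_m\Omega$; for $u:\Omega\to\mathbb{R}$ and $\psi$ on $\partial_m\Omega$, $u_\psi$ equals $u$ on $\Omega$ and $\psi$ on $\partial_m\Omega$. For $q\ge1$, $(m,\nu)$ satisfies a $q$-Poincaré inequality in $\Omega$ if there is $\lambda>0$ such that $\lambda\int_\Omega|u(x)|^q\,d\nu(x)\le\int_\Omega\int_{\Omega_m}|u_\psi(y)-u(x)|^q\,dm_x(y)\,d\nu(x)+\int_{\partial_m\Omega}|\psi(y)|^q\,d\nu(y)$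 for all $u\in L^q(\Omega,\nu)$ and all $\psi\in L^q(\partial_m\Omega,\nu)$. *)

theory Defs
  imports "HOL-Analysis.Analysis"
begin

definition curve_length :: "(real \<Rightarrow> 'a::metric_space) \<Rightarrow> ennreal" where
  "curve_length \<gamma> =
     (SUP p \<in> {(n, t). t 0 = 0 \<and> t n = 1 \<and> (\<forall>i<n. t i \<le> t (Suc i))}.
        (\<Sum>i<fst p. ennreal (dist (\<gamma> (snd p i)) (\<gamma> (snd p (Suc i))))))"

definition length_space :: "'a::metric_space itself \<Rightarrow> bool" where
  "length_space _ \<longleftrightarrow> (\<forall>x y::'a. ennreal (dist x y) =
      (INF \<gamma> \<in> {\<gamma>. continuous_on {0..1} \<gamma> \<and> \<gamma> 0 = x \<and> \<gamma> 1 = y}. curve_length \<gamma>))"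

definition doubling :: "'a::metric_space measure \<Rightarrow> bool" where
  "doubling \<nu> \<longleftrightarrow> (\<exists>C\<ge>1. \<forall>x r. r > 0 \<longrightarrow>
      0 < emeasure \<nu> (ball x (2 * r)) \<and>
      emeasure \<nu> (ball x (2 * r)) \<le> ennreal C * emeasure \<nu> (ball x r) \<and>
      emeasure \<nu> (ball x r) < \<infinity>)"

definition rw :: "'a::metric_space measure \<Rightarrow> real \<Rightarrow> 'a \<Rightarrow> 'a measure" where
  "rw \<nu> \<epsilon> x = density \<nu> (\<lambda>y. indicator (ball x \<epsilon>) y / emeasure \<nu> (ball x \<epsilon>))"

definition ergodic_rw :: "'a::metric_space measure \<Rightarrow> real \<Rightarrow> bool" where
  "ergodic_rw \<nu> \<epsilon> \<longleftrightarrow> (\<forall>B \<in> sets (borel :: 'a measure).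
      (\<forall>x\<in>B. emeasure (rw \<nu> \<epsilon> x) B = 1) \<longrightarrow>
      emeasure \<nu> B = 0 \<or> emeasure \<nu> B = emeasure \<nu> (space \<nu>))"

definition m_boundary :: "'a::metric_space measure \<Rightarrow> real \<Rightarrow> 'a set \<Rightarrow> 'a set" where
  "m_boundary \<nu> \<epsilon> \<Omega> = {x \<in> space \<nu> - \<Omega>. emeasure (rw \<nu> \<epsilon> x) \<Omega> > 0}"

definition m_closure :: "'a::metric_space measure \<Rightarrow> real \<Rightarrow> 'a set \<Rightarrow> 'a set" where
  "m_closure \<nu> \<epsilon> \<Omega> = \<Omega> \<union> m_boundary \<nu> \<epsilon> \<Omega>"

definition Lq_on :: "'a measure \<Rightarrow> real \<Rightarrow> 'a set \<Rightarrow> ('a \<Rightarrow> real) \<Rightarrow> bool" where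
  "Lq_on \<nu> q A f \<longleftrightarrow> set_borel_measurable \<nu> A f \<and>
      (\<integral>\<^sup>+ x \<in> A. ennreal (\<bar>f x\<bar> powr q) \<partial>\<nu>) < \<infinity>"

definition poincare_ineq :: "'a::metric_space measure \<Rightarrow> real \<Rightarrow> real \<Rightarrow> 'a set \<Rightarrow> bool" where
  "poincare_ineq \<nu> \<epsilon> q \<Omega> \<longleftrightarrow> (\<exists>lam::real. lam > 0 \<and>
     (\<forall>u \<psi>. Lq_on \<nu> q \<Omega> u \<longrightarrow> Lq_on \<nu> q (m_boundary \<nu> \<epsilon> \<Omega>) \<psi> \<longrightarrow>
        ennreal lam * (\<integral>\<^sup>+ x \<in> \<Omega>. ennreal (\<bar>u x\<bar> powr q) \<partial>\<nu>)
        \<le> (\<integral>\<^sup>+ x \<in> \<Omega>. (\<integral>\<^sup>+ y \<in> m_closure \<nu> \<epsilon> \<Omega>.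
               ennreal (\<bar>(if y \<in> \<Omega> then u y else \<psi> y) - u x\<bar> powr q) \<partial>(rw \<nu> \<epsilon> x)) \<partial>\<nu>)
          + (\<integral>\<^sup>+ y \<in> m_boundary \<nu> \<epsilon> \<Omega>. ennreal (\<bar>\<psi> y\<bar> powr q) \<partial>\<nu>)))"

end

theory Submission
  imports Defs
begin

(*
  Call A \<subseteq> \<Omega> controlled if \<integral>\<^sub>A |u|\<^sup>p \<le> C \<cdot> E(u,\<psi>) for all measurable u, \<psi>, where E(u,\<psi>)
  is the right-hand side of the Poincare inequality; the theorem says that \<Omega> is controlled.
  Integrating |u x|\<^sup>p \<le> 2\<^sup>p (|u\<^sub>\<psi> y - u x|\<^sup>p + |u\<^sub>\<psi> y|\<^sup>p) over x \<in> A and y \<in> B, where A and B are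
  closer than \<epsilon> and \<nu>(B) > 0, shows that A is controlled as soon as B \<inter> \<Omega> is: the walk m\<^sub>x has
  density at least 1/\<nu>(X) on B, and B - \<Omega> lies in the m-boundary, which E accounts for.
  Doubling and \<nu>(X) < \<infinity> make \<Omega> totally bounded, so finitely many balls of radius \<delta> = \<epsilon>/5
  cover it. If B(z,\<delta>) \<inter> \<Omega> is not controlled, then B(z,\<epsilon>-\<delta>) - \<Omega> is \<nu>-null and every ball
  B(z',\<delta>) with d(z,z') < \<epsilon>-2\<delta> is not controlled either. Hence the uncontrolled balls form a
  clopen set, which by connectedness of the length space is all of X, and then \<nu>(X - \<Omega>) = 0,
  contradicting \<nu>(\<Omega>) < \<nu>(X).
*)

lemma abs_powr_le_two_powr:
  fixes a b p :: real
  assumes "0 < p"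
  shows "\<bar>a\<bar> powr p \<le> 2 powr p * (\<bar>b - a\<bar> powr p + \<bar>b\<bar> powr p)"
proof -
  let ?m = "max \<bar>b - a\<bar> \<bar>b\<bar>"
  have "\<bar>a\<bar> powr p \<le> (2 * ?m) powr p"
    using assms by (intro powr_mono2) (auto simp: abs_if max_def)
  also have "\<dots> = 2 powr p * ?m powr p"
    by (simp add: powr_mult)
  also have "?m powr p \<le> \<bar>b - a\<bar> powr p + \<bar>b\<bar> powr p"
    by (simp add: max_def)
  finally show ?thesis
    by simp
qed

(* No measurability is required of g: it is applied to x \<mapsto> \<integral> \<dots> dm\<^sub>x, which is not known to be
   measurable in x. *)
lemma nn_integral_le_cmult:
  fixes f g :: "'a \<Rightarrow> ennreal"
  assumes f: "f \<in> borel_measurable M" and "c < \<infinity>" and le: "\<And>x. f x \<le> c * g x"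
  shows "(\<integral>\<^sup>+ x. f x \<partial>M) \<le> c * (\<integral>\<^sup>+ x. g x \<partial>M)"
proof (cases "c = 0")
  case True
  then show ?thesis
    using le by (simp add: le_zero_eq)
next
  case False
  have "(\<integral>\<^sup>+ x. f x \<partial>M) = c * (\<integral>\<^sup>+ x. f x / c \<partial>M)"
    using False \<open>c < \<infinity>\<close> f
    by (subst nn_integral_cmult[symmetric])
       (auto simp: ennreal_times_divide mult.commute[of c] mult_divide_eq_ennreal)
  also have "\<dots> \<le> c * (\<integral>\<^sup>+ x. g x \<partial>M)"
    using False le
    by (intro mult_left_mono nn_integral_mono divide_le_posI_ennreal)
       (auto simp: zero_less_iff_neq_zero)
  finally show ?thesis .
qed

lemma emeasure_mult_abs_powr_le:
  fixes w :: "'a \<Rightarrow> real"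
  assumes "0 < p" and [measurable]: "B \<in> sets M" "w \<in> borel_measurable M"
  shows "emeasure M B * ennreal (\<bar>t\<bar> powr p)
    \<le> ennreal (2 powr p) * ((\<integral>\<^sup>+ y \<in> B. ennreal (\<bar>w y - t\<bar> powr p) \<partial>M)
                             + (\<integral>\<^sup>+ y \<in> B. ennreal (\<bar>w y\<bar> powr p) \<partial>M))"
proof -
  have "emeasure M B * ennreal (\<bar>t\<bar> powr p) = (\<integral>\<^sup>+ y \<in> B. ennreal (\<bar>t\<bar> powr p) \<partial>M)"
    by (metis assms(2) mult.commute nn_integral_cmult_indicator)
  also have "\<dots> \<le> (\<integral>\<^sup>+ y. ennreal (2 powr p) *
      (ennreal (\<bar>w y - t\<bar> powr p) * indicator B y + ennreal (\<bar>w y\<bar> powr p) * indicator B y) \<partial>M)"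
  proof (intro nn_integral_mono)
    fix y
    have "ennreal (\<bar>t\<bar> powr p)
        \<le> ennreal (2 powr p) * (ennreal (\<bar>w y - t\<bar> powr p) + ennreal (\<bar>w y\<bar> powr p))"
      using abs_powr_le_two_powr[OF \<open>0 < p\<close>, of t "w y"]
      by (simp add: ennreal_mult[symmetric] ennreal_plus[symmetric] del: ennreal_plus)
    then show "ennreal (\<bar>t\<bar> powr p) * indicator B y \<le> ennreal (2 powr p) *
        (ennreal (\<bar>w y - t\<bar> powr p) * indicator B y + ennreal (\<bar>w y\<bar> powr p) * indicator B y)"
      by (simp add: indicator_def)
  qed
  also have "\<dots> = ennreal (2 powr p) * ((\<integral>\<^sup>+ y \<in> B. ennreal (\<bar>w y - t\<bar> powr p) \<partial>M)
                                        + (\<integral>\<^sup>+ y \<in> B. ennreal (\<bar>w y\<bar> powr p) \<partial>M))"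
    by (simp add: nn_integral_cmult nn_integral_add)
  finally show ?thesis .
qed

lemma length_space_imp_connected_UNIV:
  assumes "length_space TYPE('a::metric_space)"
  shows "connected (UNIV::'a set)"
proof (rule path_connected_imp_connected, unfold path_connected_def, intro ballI)
  fix x y :: 'a
  let ?curves = "{\<gamma>::real \<Rightarrow> 'a. continuous_on {0..1} \<gamma> \<and> \<gamma> 0 = x \<and> \<gamma> 1 = y}"
  have "(INF \<gamma> \<in> ?curves. curve_length \<gamma>) < top"
    using assms unfolding length_space_def by (metis ennreal_less_top infinity_ennreal_def)
  then obtain \<gamma> where "\<gamma> \<in> ?curves"
    by (auto simp: INF_less_iff)
  then show "\<exists>g. path g \<and> path_image g \<subseteq> UNIV \<and> pathstart g = x \<and> pathfinish g = y"
    by (auto simp: path_def pathstart_def pathfinish_def)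
qed

lemma doubling_completion:
  assumes "sets borel \<subseteq> sets \<nu>" "doubling \<nu>"
  shows "doubling (completion \<nu>)"
proof -
  have "ball x r \<in> sets \<nu>" for x r
    using assms(1) borel_open[OF open_ball] by blast
  then have "emeasure (completion \<nu>) (ball x r) = emeasure \<nu> (ball x r)" for x r
    by simp
  then show ?thesis
    using assms(2) by (simp add: doubling_def)
qed

lemma UN_balls_eq_UNIV_if_connected:
  fixes K :: "'a::metric_space set"
  assumes "connected (UNIV::'a set)" "finite K" "K \<noteq> {}" "0 < r" "r < R"
    and spread: "\<And>z. z \<in> K \<Longrightarrow> ball z R \<subseteq> (\<Union>z'\<in>K. ball z' r)"
  shows "(\<Union>z\<in>K. ball z r) = UNIV"
proof -
  let ?W = "\<Union>z\<in>K. ball z r"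
  have "?W = (\<Union>z\<in>K. cball z r)"
    using spread cball_subset_ball_iff[of _ r _ R] \<open>r < R\<close>
    by (fastforce dest!: mem_ball_imp_mem_cball)
  then have "closed ?W"
    using \<open>finite K\<close> by (simp add: closed_UN)
  moreover have "?W \<noteq> {}"
    using \<open>K \<noteq> {}\<close> \<open>0 < r\<close> by (auto intro: centre_in_ball[THEN iffD2])
  moreover have "open ?W"
    by (simp add: open_UN)
  moreover have "\<forall>T::'a set. open T \<and> closed T \<longrightarrow> T = {} \<or> T = UNIV"
    using assms(1) unfolding connected_clopen by simp
  ultimately show ?thesis
    by blast
qed

locale finite_doubling_measure = finite_measure M
  for M :: "'a::metric_space measure" +
  assumes space_eq [simp]: "space M = UNIV"
    and borel_subset_sets: "sets borel \<subseteq> sets M"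
    and doubling: "doubling M"
begin

lemma sets_ball [measurable]: "ball x r \<in> sets M"
  using borel_subset_sets by auto

lemma sets_open: "open A \<Longrightarrow> A \<in> sets M"
  using borel_subset_sets by auto

lemma emeasure_ball_pos: "0 < r \<Longrightarrow> 0 < emeasure M (ball x r)"
  using doubling unfolding doubling_def by (metis field_sum_of_halves half_gt_zero mult_2)

lemma emeasure_ball_pow2_le:
  obtains C where "1 \<le> C"
    and "\<And>x r n. 0 < r \<Longrightarrow> emeasure M (ball x (2 ^ n * r)) \<le> ennreal (C ^ n) * emeasure M (ball x r)"
proof -
  obtain C where "1 \<le> C"
    and C: "\<And>x r. 0 < r \<Longrightarrow> emeasure M (ball x (2 * r)) \<le> ennreal C * emeasure M (ball x r)"
    using doubling unfolding doubling_def by blast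
  have "emeasure M (ball x (2 ^ n * r)) \<le> ennreal (C ^ n) * emeasure M (ball x r)"
    if "0 < r" for x r n
  proof (induction n)
    case (Suc n)
    have "emeasure M (ball x (2 ^ Suc n * r)) \<le> ennreal C * emeasure M (ball x (2 ^ n * r))"
      using C[of "2 ^ n * r" x] \<open>0 < r\<close> by (simp add: mult.assoc)
    also have "\<dots> \<le> ennreal C * (ennreal (C ^ n) * emeasure M (ball x r))"
      using Suc by (intro mult_left_mono) auto
    finally show ?case
      using \<open>1 \<le> C\<close> by (simp add: ennreal_mult mult.assoc)
  qed simp
  with \<open>1 \<le> C\<close> show ?thesis
    using that by blast
qed

lemma measure_ball_uniform_lower_bound:
  assumes "0 < r" "0 < R"
  obtains c where "0 < c" "\<And>y. y \<in> ball x R \<Longrightarrow> c \<le> measure M (ball y r)"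
proof -
  obtain C where "1 \<le> C"
    and C: "\<And>x r n. 0 < r \<Longrightarrow>
      emeasure M (ball x (2 ^ n * r)) \<le> ennreal (C ^ n) * emeasure M (ball x r)"
    using emeasure_ball_pow2_le by blast
  obtain n where "2 * R / r < 2 ^ n"
    using real_arch_pow[of 2 "2 * R / r"] by auto
  then have n: "2 * R \<le> 2 ^ n * r"
    using \<open>0 < r\<close> by (simp add: field_simps)
  have "measure M (ball x R) / C ^ n \<le> measure M (ball y r)" if "y \<in> ball x R" for y
  proof -
    have "ball x R \<subseteq> ball y (2 ^ n * r)"
      using that n unfolding subset_eq mem_ball by metric
    then have "emeasure M (ball x R) \<le> ennreal (C ^ n) * emeasure M (ball y r)"
      using C[OF \<open>0 < r\<close>] by (meson emeasure_mono order_trans sets_ball)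
    then have "measure M (ball x R) \<le> C ^ n * measure M (ball y r)"
      using \<open>1 \<le> C\<close> by (simp add: emeasure_eq_measure ennreal_mult[symmetric])
    then show ?thesis
      using \<open>1 \<le> C\<close> by (simp add: divide_le_eq mult.commute)
  qed
  moreover have "0 < measure M (ball x R) / C ^ n"
    using emeasure_ball_pos[OF \<open>0 < R\<close>] \<open>1 \<le> C\<close> by (simp add: emeasure_eq_measure)
  ultimately show ?thesis
    using that by blast
qed

lemma card_separated_bounded:
  fixes x :: 'a
  assumes "0 < e" "0 < R"
  obtains N where "\<And>P. finite P \<Longrightarrow> P \<subseteq> ball x R \<Longrightarrow> pairwise (\<lambda>a b. e \<le> dist a b) P \<Longrightarrow> card P \<le> N"
proof -
  obtain c where "0 < c" and c: "\<And>y. y \<in> ball x R \<Longrightarrow> c \<le> measure M (ball y (e / 2))"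
    using measure_ball_uniform_lower_bound[of "e / 2" R x] assms by (metis half_gt_zero)
  have "card P \<le> nat \<lceil>measure M UNIV / c\<rceil>"
    if P: "finite P" "P \<subseteq> ball x R" "pairwise (\<lambda>a b. e \<le> dist a b) P" for P
  proof -
    have disjoint: "disjoint_family_on (\<lambda>a. ball a (e / 2)) P"
      using P(3) unfolding disjoint_family_on_def pairwise_def disjoint_iff mem_ball
      by (metis dist_commute dist_triangle_half_l not_less)
    have "real (card P) * c = (\<Sum>a\<in>P. c)"
      by simp
    also have "\<dots> \<le> (\<Sum>a\<in>P. measure M (ball a (e / 2)))"
      using c P(2) by (intro sum_mono) auto
    also have "\<dots> = measure M (\<Union>a\<in>P. ball a (e / 2))"
      using P(1) disjoint
      by (intro finite_measure_finite_Union[symmetric]) (auto simp: image_subset_iff)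
    also have "\<dots> \<le> measure M UNIV"
      using bounded_measure by simp
    finally have "real (card P) \<le> measure M UNIV / c"
      using \<open>0 < c\<close> by (simp add: le_divide_eq)
    then show ?thesis
      by linarith
  qed
  then show ?thesis
    using that by blast
qed

lemma bounded_imp_totally_bounded:
  fixes S :: "'a set"
  assumes "bounded S"
  shows "totally_bounded S"
  unfolding totally_bounded_metric
proof (intro allI impI)
  fix e :: real
  assume "0 < e"
  obtain x R where "0 < R" "S \<subseteq> ball x R"
    using bounded_subset_ballD[OF assms] by blast
  define separated where "separated P \<longleftrightarrow> finite P \<and> P \<subseteq> S \<and> pairwise (\<lambda>a b. e \<le> dist a b) P" for P
  obtain N where N: "\<And>P. finite P \<Longrightarrow> P \<subseteq> ball x R \<Longrightarrow> pairwise (\<lambda>a b. e \<le> dist a b) P \<Longrightarrow> card P \<le> N"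
    using card_separated_bounded[OF \<open>0 < e\<close> \<open>0 < R\<close>] by blast
  have "separated {}" "\<And>P. separated P \<Longrightarrow> card P < Suc N"
    using N \<open>S \<subseteq> ball x R\<close> unfolding separated_def by (auto intro: le_imp_less_Suc)
  then obtain P where "separated P" and P_max: "\<And>Q. separated Q \<Longrightarrow> card Q \<le> card P"
    using ex_has_greatest_nat[of separated "{}" card "Suc N"] by blast
  have "\<exists>a\<in>P. dist a y < e" if "y \<in> S" for y
  proof (rule ccontr)
    assume far: "\<not> (\<exists>a\<in>P. dist a y < e)"
    then have "y \<notin> P"
      using \<open>0 < e\<close> by (metis dist_self)
    moreover have "separated (insert y P)"
      using \<open>separated P\<close> far \<open>y \<in> S\<close> unfolding separated_def pairwise_insert
      by (simp add: dist_commute not_less)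
    ultimately show False
      using P_max[of "insert y P"] \<open>separated P\<close> by (simp add: separated_def)
  qed
  then have "S \<subseteq> (\<Union>a\<in>P. {y. dist a y < e})"
    by blast
  with \<open>separated P\<close> show "\<exists>k. finite k \<and> S \<subseteq> (\<Union>x\<in>k. {y. dist x y < e})"
    unfolding separated_def by blast
qed

lemma open_emeasure_Int_ball_pos:
  assumes [measurable]: "A \<in> sets M"
  shows "open {x. 0 < emeasure M (A \<inter> ball x r)}"
  unfolding open_contains_ball
proof (intro ballI)
  fix x
  assume "x \<in> {x. 0 < emeasure M (A \<inter> ball x r)}"
  then have pos: "0 < emeasure M (A \<inter> ball x r)"
    by simp
  define B where "B n = A \<inter> ball x (r - 1 / Suc n)" for n :: nat
  have "incseq B"
    unfolding incseq_def B_def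
    by (intro allI impI Int_mono order_refl subset_ball diff_left_mono) (simp add: frac_le)
  moreover have "(\<Union>n. B n) = A \<inter> ball x r"
  proof (intro equalityI)
    show "A \<inter> ball x r \<subseteq> (\<Union>n. B n)"
    proof
      fix y
      assume y: "y \<in> A \<inter> ball x r"
      then obtain n where "1 / Suc n < r - dist x y"
        using reals_Archimedean[of "r - dist x y"] by (auto simp: inverse_eq_divide)
      with y have "y \<in> B n"
        by (simp add: B_def)
      then show "y \<in> (\<Union>n. B n)"
        by blast
    qed
  next
    show "(\<Union>n. B n) \<subseteq> A \<inter> ball x r"
      unfolding B_def by (intro UN_least Int_mono order_refl subset_ball) simp
  qed
  moreover have "range B \<subseteq> sets M"
    unfolding B_def by auto
  ultimately have "(SUP n. emeasure M (B n)) = emeasure M (A \<inter> ball x r)"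
    by (metis SUP_emeasure_incseq)
  with pos obtain n where n: "0 < emeasure M (B n)"
    by (metis less_SUP_iff)
  have "ball x (1 / Suc n) \<subseteq> {x. 0 < emeasure M (A \<inter> ball x r)}"
  proof
    fix y
    assume "y \<in> ball x (1 / Suc n)"
    then have "ball x (r - 1 / Suc n) \<subseteq> ball y r"
      unfolding subset_eq mem_ball by metric
    then have "B n \<subseteq> A \<inter> ball y r"
      unfolding B_def by blast
    then show "y \<in> {x. 0 < emeasure M (A \<inter> ball x r)}"
      using n emeasure_mono[of "B n" "A \<inter> ball y r" M] by simp
  qed
  then show "\<exists>e>0. ball x e \<subseteq> {x. 0 < emeasure M (A \<inter> ball x r)}"
    by (intro exI[of _ "1 / Suc n"]) simp
qed

lemma nn_integral_rw:
  assumes [measurable]: "f \<in> borel_measurable M" and "0 < r"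
  shows "emeasure M (ball x r) * (\<integral>\<^sup>+ y. f y \<partial>rw M r x) = (\<integral>\<^sup>+ y \<in> ball x r. f y \<partial>M)"
proof -
  let ?b = "emeasure M (ball x r)"
  have b: "?b \<noteq> 0" "?b \<noteq> \<infinity>"
    using emeasure_ball_pos[OF \<open>0 < r\<close>, of x] by auto
  have "?b * (\<integral>\<^sup>+ y. f y \<partial>rw M r x) = ?b * (\<integral>\<^sup>+ y. indicator (ball x r) y / ?b * f y \<partial>M)"
    unfolding rw_def by (subst nn_integral_density) auto
  also have "\<dots> = (\<integral>\<^sup>+ y. ?b * (indicator (ball x r) y / ?b * f y) \<partial>M)"
    by (rule nn_integral_cmult[symmetric]) measurable
  also have "\<dots> = (\<integral>\<^sup>+ y \<in> ball x r. f y \<partial>M)"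
    using b by (intro nn_integral_cong)
      (simp add: indicator_def ennreal_times_divide mult.commute mult_divide_eq_ennreal)
  finally show ?thesis .
qed

lemma nn_integral_ball_le_rw:
  assumes "f \<in> borel_measurable M" and "0 < r"
  shows "(\<integral>\<^sup>+ y \<in> ball x r. f y \<partial>M) \<le> emeasure M (space M) * (\<integral>\<^sup>+ y. f y \<partial>rw M r x)"
  unfolding nn_integral_rw[OF assms, symmetric]
  by (intro mult_right_mono emeasure_space) simp

lemma emeasure_rw_pos_iff:
  assumes [measurable]: "A \<in> sets M" and "0 < r"
  shows "0 < emeasure (rw M r x) A \<longleftrightarrow> 0 < emeasure M (A \<inter> ball x r)"
proof -
  have "emeasure M (ball x r) * emeasure (rw M r x) A = emeasure M (A \<inter> ball x r)"
    using nn_integral_rw[of "indicator A" r x] \<open>0 < r\<close>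
    by (simp add: rw_def nn_integral_indicator indicator_inter_arith[symmetric] Int_commute)
  moreover have "0 < emeasure M (ball x r)"
    by (rule emeasure_ball_pos[OF \<open>0 < r\<close>])
  ultimately show ?thesis
    by (metis mult_eq_0_iff not_gr_zero)
qed

end

locale poincare_setting = finite_doubling_measure M
  for M :: "'a::metric_space measure" +
  fixes \<epsilon> p :: real and \<Omega> :: "'a set"
  assumes connected_UNIV: "connected (UNIV::'a set)"
    and eps_pos: "0 < \<epsilon>"
    and p_pos: "0 < p"
    and sets_\<Omega> [measurable]: "\<Omega> \<in> sets M"
    and bounded_\<Omega>: "bounded \<Omega>"
    and emeasure_\<Omega>_less: "emeasure M \<Omega> < emeasure M (space M)"
begin

abbreviation \<Gamma> :: "'a set" where
  "\<Gamma> \<equiv> m_boundary M \<epsilon> \<Omega>"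

lemma m_boundary_eq: "\<Gamma> = {x. 0 < emeasure M (\<Omega> \<inter> ball x \<epsilon>)} - \<Omega>"
  using emeasure_rw_pos_iff[OF sets_\<Omega> eps_pos] by (auto simp: m_boundary_def)

lemma sets_m_boundary [measurable]: "\<Gamma> \<in> sets M"
  unfolding m_boundary_eq using sets_open[OF open_emeasure_Int_ball_pos[OF sets_\<Omega>]] by auto

definition admissible :: "('a \<Rightarrow> real) \<Rightarrow> ('a \<Rightarrow> real) \<Rightarrow> bool" where
  "admissible u \<psi> \<longleftrightarrow> set_borel_measurable M \<Omega> u \<and> set_borel_measurable M \<Gamma> \<psi>"

(* The paper's u\<^sub>\<psi>, set to 0 off \<Omega> \<union> \<Gamma> so that it is measurable. *)
definition extend :: "('a \<Rightarrow> real) \<Rightarrow> ('a \<Rightarrow> real) \<Rightarrow> 'a \<Rightarrow> real" where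
  "extend u \<psi> y = (if y \<in> \<Omega> then u y else if y \<in> \<Gamma> then \<psi> y else 0)"

definition energy :: "('a \<Rightarrow> real) \<Rightarrow> ('a \<Rightarrow> real) \<Rightarrow> ennreal" where
  "energy u \<psi> =
     (\<integral>\<^sup>+ x \<in> \<Omega>. (\<integral>\<^sup>+ y \<in> m_closure M \<epsilon> \<Omega>.
        ennreal (\<bar>(if y \<in> \<Omega> then u y else \<psi> y) - u x\<bar> powr p) \<partial>rw M \<epsilon> x) \<partial>M)
     + (\<integral>\<^sup>+ y \<in> \<Gamma>. ennreal (\<bar>\<psi> y\<bar> powr p) \<partial>M)"

definition controlled :: "'a set \<Rightarrow> bool" where
  "controlled A \<longleftrightarrow> (\<exists>C<\<infinity>. \<forall>u \<psi>. admissible u \<psi> \<longrightarrow>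
      (\<integral>\<^sup>+ x \<in> A. ennreal (\<bar>u x\<bar> powr p) \<partial>M) \<le> C * energy u \<psi>)"

lemma borel_measurable_extend:
  assumes "admissible u \<psi>"
  shows "extend u \<psi> \<in> borel_measurable M"
proof -
  have "extend u \<psi> = (\<lambda>y. indicator \<Omega> y *\<^sub>R u y + indicator \<Gamma> y *\<^sub>R \<psi> y)"
    by (auto simp: extend_def m_boundary_def indicator_def)
  then show ?thesis
    using assms by (auto simp: admissible_def set_borel_measurable_def)
qed

lemma borel_measurable_mass_integrand:
  assumes "admissible u \<psi>" "A \<in> sets M" "A \<subseteq> \<Omega>"
  shows "(\<lambda>x. ennreal (\<bar>u x\<bar> powr p) * indicator A x) \<in> borel_measurable M"
proof -
  have "(\<lambda>x. ennreal (\<bar>extend u \<psi> x\<bar> powr p) * indicator A x) \<in> borel_measurable M"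
    using borel_measurable_extend[OF assms(1)] assms(2) by measurable
  moreover have "ennreal (\<bar>extend u \<psi> x\<bar> powr p) * indicator A x
      = ennreal (\<bar>u x\<bar> powr p) * indicator A x" for x
    using assms(3) by (auto simp: extend_def indicator_def)
  ultimately show ?thesis
    by simp
qed

lemma controlled_null: "A \<in> null_sets M \<Longrightarrow> controlled A"
  unfolding controlled_def by (intro exI[of _ 0]) (simp add: nn_integral_null_set)

lemma controlled_Un:
  assumes "A \<in> sets M" "A \<subseteq> \<Omega>" "controlled A" "B \<in> sets M" "B \<subseteq> \<Omega>" "controlled B"
  shows "controlled (A \<union> B)"
proof -
  obtain C D where "C < \<infinity>" "D < \<infinity>"
    and C: "\<And>u \<psi>. admissible u \<psi> \<Longrightarrow> (\<integral>\<^sup>+ x \<in> A. ennreal (\<bar>u x\<bar> powr p) \<partial>M) \<le> C * energy u \<psi>"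
    and D: "\<And>u \<psi>. admissible u \<psi> \<Longrightarrow> (\<integral>\<^sup>+ x \<in> B. ennreal (\<bar>u x\<bar> powr p) \<partial>M) \<le> D * energy u \<psi>"
    using assms(3,6) unfolding controlled_def by blast
  have "(\<integral>\<^sup>+ x \<in> A \<union> B. ennreal (\<bar>u x\<bar> powr p) \<partial>M) \<le> (C + D) * energy u \<psi>"
    if "admissible u \<psi>" for u \<psi>
  proof -
    have "(\<integral>\<^sup>+ x \<in> A \<union> B. ennreal (\<bar>u x\<bar> powr p) \<partial>M)
        \<le> (\<integral>\<^sup>+ x. ennreal (\<bar>u x\<bar> powr p) * indicator A x
                + ennreal (\<bar>u x\<bar> powr p) * indicator B x \<partial>M)"
      by (intro nn_integral_mono) (auto simp: indicator_def)
    also have "\<dots> = (\<integral>\<^sup>+ x \<in> A. ennreal (\<bar>u x\<bar> powr p) \<partial>M) + (\<integral>\<^sup>+ x \<in> B. ennreal (\<bar>u x\<bar> powr p) \<partial>M)"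
      using assms that by (intro nn_integral_add borel_measurable_mass_integrand)
    also have "\<dots> \<le> (C + D) * energy u \<psi>"
      using C[OF that] D[OF that] by (simp add: distrib_right add_mono)
    finally show ?thesis .
  qed
  moreover have "C + D < \<infinity>"
    using \<open>C < \<infinity>\<close> \<open>D < \<infinity>\<close> by simp
  ultimately show ?thesis
    unfolding controlled_def by blast
qed

lemma controlled_UN:
  assumes "finite I" "\<And>i. i \<in> I \<Longrightarrow> A i \<in> sets M" "\<And>i. i \<in> I \<Longrightarrow> A i \<subseteq> \<Omega>"
    and "\<And>i. i \<in> I \<Longrightarrow> controlled (A i)"
  shows "controlled (\<Union>i\<in>I. A i)"
  using assms
proof (induction rule: finite_induct)
  case empty
  then show ?case
    by (simp add: controlled_null)
next
  case (insert i I)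
  then show ?case
    by (simp add: controlled_Un sets.finite_UN UN_least)
qed

lemma nn_integral_near_le_rw:
  assumes "admissible u \<psi>" "x \<in> \<Omega>" "B \<subseteq> ball x \<epsilon>" "B \<subseteq> \<Omega> \<union> \<Gamma>"
  shows "(\<integral>\<^sup>+ y \<in> B. ennreal (\<bar>extend u \<psi> y - u x\<bar> powr p) \<partial>M)
    \<le> emeasure M (space M) * (\<integral>\<^sup>+ y \<in> m_closure M \<epsilon> \<Omega>.
         ennreal (\<bar>(if y \<in> \<Omega> then u y else \<psi> y) - u x\<bar> powr p) \<partial>rw M \<epsilon> x)"
proof -
  let ?f = "\<lambda>y. ennreal (\<bar>extend u \<psi> y - u x\<bar> powr p) * indicator (m_closure M \<epsilon> \<Omega>) y"
  have [measurable]: "extend u \<psi> \<in> borel_measurable M"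
    using assms(1) by (rule borel_measurable_extend)
  have "(\<integral>\<^sup>+ y \<in> B. ennreal (\<bar>extend u \<psi> y - u x\<bar> powr p) \<partial>M) \<le> (\<integral>\<^sup>+ y \<in> ball x \<epsilon>. ?f y \<partial>M)"
    using assms(3,4) by (intro nn_integral_mono) (auto simp: indicator_def m_closure_def)
  also have "\<dots> \<le> emeasure M (space M) * (\<integral>\<^sup>+ y. ?f y \<partial>rw M \<epsilon> x)"
    using eps_pos by (intro nn_integral_ball_le_rw) (auto simp: m_closure_def)
  also have "(\<integral>\<^sup>+ y. ?f y \<partial>rw M \<epsilon> x) = (\<integral>\<^sup>+ y \<in> m_closure M \<epsilon> \<Omega>.
      ennreal (\<bar>(if y \<in> \<Omega> then u y else \<psi> y) - u x\<bar> powr p) \<partial>rw M \<epsilon> x)"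
    by (intro nn_integral_cong) (auto simp: extend_def m_closure_def indicator_def)
  finally show ?thesis .
qed

lemma emeasure_mult_mass_le_energy:
  assumes adm: "admissible u \<psi>"
    and A [measurable]: "A \<in> sets M" and "A \<subseteq> \<Omega>"
    and B [measurable]: "B \<in> sets M" and "B \<subseteq> \<Omega> \<union> \<Gamma>"
    and near: "\<And>x y. x \<in> A \<Longrightarrow> y \<in> B \<Longrightarrow> dist x y < \<epsilon>"
  shows "emeasure M B * (\<integral>\<^sup>+ x \<in> A. ennreal (\<bar>u x\<bar> powr p) \<partial>M)
    \<le> ennreal (2 powr p) * emeasure M (space M) *
       (energy u \<psi> + (\<integral>\<^sup>+ y \<in> B. ennreal (\<bar>extend u \<psi> y\<bar> powr p) \<partial>M))"
proof -
  define w where "w = extend u \<psi>"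
  have [measurable]: "w \<in> borel_measurable M"
    unfolding w_def using adm by (rule borel_measurable_extend)
  let ?V = "emeasure M (space M)"
  let ?R = "\<lambda>x. \<integral>\<^sup>+ y \<in> m_closure M \<epsilon> \<Omega>.
              ennreal (\<bar>(if y \<in> \<Omega> then u y else \<psi> y) - u x\<bar> powr p) \<partial>rw M \<epsilon> x"
  let ?I = "\<lambda>x. \<integral>\<^sup>+ y \<in> B. ennreal (\<bar>w y - w x\<bar> powr p) \<partial>M"
  let ?K = "\<integral>\<^sup>+ y \<in> B. ennreal (\<bar>w y\<bar> powr p) \<partial>M"
  have I_le_R: "?I x \<le> ?V * ?R x" if "x \<in> A" for x
  proof -
    have "w x = u x"
      using that \<open>A \<subseteq> \<Omega>\<close> by (auto simp: w_def extend_def)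
    moreover have "B \<subseteq> ball x \<epsilon>"
      using near[OF that] by auto
    ultimately show ?thesis
      using nn_integral_near_le_rw[OF adm _ _ \<open>B \<subseteq> \<Omega> \<union> \<Gamma>\<close>] that \<open>A \<subseteq> \<Omega>\<close>
      unfolding w_def by auto
  qed
  have "(\<integral>\<^sup>+ x \<in> A. ennreal (\<bar>u x\<bar> powr p) \<partial>M) = (\<integral>\<^sup>+ x \<in> A. ennreal (\<bar>w x\<bar> powr p) \<partial>M)"
    using \<open>A \<subseteq> \<Omega>\<close> by (intro nn_integral_cong) (auto simp: w_def extend_def indicator_def)
  then have "emeasure M B * (\<integral>\<^sup>+ x \<in> A. ennreal (\<bar>u x\<bar> powr p) \<partial>M)
      = (\<integral>\<^sup>+ x \<in> A. emeasure M B * ennreal (\<bar>w x\<bar> powr p) \<partial>M)"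
    by (simp add: nn_integral_cmult[symmetric] mult.assoc)
  also have "\<dots> \<le> (\<integral>\<^sup>+ x \<in> A. ennreal (2 powr p) * (?I x + ?K) \<partial>M)"
    using emeasure_mult_abs_powr_le[OF p_pos B] by (intro nn_integral_mono mult_right_mono) auto
  also have "\<dots> = ennreal (2 powr p) * ((\<integral>\<^sup>+ x \<in> A. ?I x \<partial>M) + ?K * emeasure M A)"
    by (simp add: nn_integral_cmult nn_integral_add distrib_right mult.assoc nn_integral_multc)
  also have "\<dots> \<le> ennreal (2 powr p) * (?V * (\<integral>\<^sup>+ x \<in> A. ?R x \<partial>M) + ?V * ?K)"
  proof (intro mult_left_mono add_mono)
    show "(\<integral>\<^sup>+ x \<in> A. ?I x \<partial>M) \<le> ?V * (\<integral>\<^sup>+ x \<in> A. ?R x \<partial>M)"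
      using I_le_R by (intro nn_integral_le_cmult) (auto simp: indicator_def less_top[symmetric])
    show "?K * emeasure M A \<le> ?V * ?K"
      using emeasure_space[of M A] by (simp add: mult.commute mult_right_mono)
  qed simp
  also have "\<dots> \<le> ennreal (2 powr p) * ?V * (energy u \<psi> + ?K)"
  proof -
    have "(\<integral>\<^sup>+ x \<in> A. ?R x \<partial>M) \<le> energy u \<psi>"
      unfolding energy_def using \<open>A \<subseteq> \<Omega>\<close>
      by (intro add_increasing2 nn_integral_mono) (auto simp: indicator_def)
    then show ?thesis
      by (simp add: mult.assoc distrib_left mult_left_mono)
  qed
  finally show ?thesis
    by (simp only: w_def)
qed

lemma nn_integral_extend_le:
  assumes adm: "admissible u \<psi>" and [measurable]: "B \<in> sets M" and "B \<subseteq> \<Omega> \<union> \<Gamma>"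
  shows "(\<integral>\<^sup>+ y \<in> B. ennreal (\<bar>extend u \<psi> y\<bar> powr p) \<partial>M)
    \<le> (\<integral>\<^sup>+ y \<in> B \<inter> \<Omega>. ennreal (\<bar>u y\<bar> powr p) \<partial>M) + energy u \<psi>"
proof -
  let ?w = "extend u \<psi>"
  have [measurable]: "?w \<in> borel_measurable M"
    using adm by (rule borel_measurable_extend)
  have "(\<integral>\<^sup>+ y \<in> B. ennreal (\<bar>?w y\<bar> powr p) \<partial>M)
      \<le> (\<integral>\<^sup>+ y. ennreal (\<bar>?w y\<bar> powr p) * indicator (B \<inter> \<Omega>) y
              + ennreal (\<bar>?w y\<bar> powr p) * indicator \<Gamma> y \<partial>M)"
    using \<open>B \<subseteq> \<Omega> \<union> \<Gamma>\<close> by (intro nn_integral_mono) (auto simp: indicator_def)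
  also have "\<dots> = (\<integral>\<^sup>+ y \<in> B \<inter> \<Omega>. ennreal (\<bar>?w y\<bar> powr p) \<partial>M)
      + (\<integral>\<^sup>+ y \<in> \<Gamma>. ennreal (\<bar>?w y\<bar> powr p) \<partial>M)"
    by (rule nn_integral_add) measurable
  also have "\<dots> = (\<integral>\<^sup>+ y \<in> B \<inter> \<Omega>. ennreal (\<bar>u y\<bar> powr p) \<partial>M)
      + (\<integral>\<^sup>+ y \<in> \<Gamma>. ennreal (\<bar>\<psi> y\<bar> powr p) \<partial>M)"
    by (intro arg_cong2[where f="(+)"] nn_integral_cong)
       (auto simp: extend_def indicator_def m_boundary_def)
  also have "\<dots> \<le> (\<integral>\<^sup>+ y \<in> B \<inter> \<Omega>. ennreal (\<bar>u y\<bar> powr p) \<partial>M) + energy u \<psi>"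
    by (intro add_left_mono) (simp add: energy_def)
  finally show ?thesis .
qed

lemma controlled_if_near_controlled:
  assumes A: "A \<in> sets M" "A \<subseteq> \<Omega>" and B [measurable]: "B \<in> sets M" "B \<subseteq> \<Omega> \<union> \<Gamma>"
    and "0 < emeasure M B" and "controlled (B \<inter> \<Omega>)"
    and near: "\<And>x y. x \<in> A \<Longrightarrow> y \<in> B \<Longrightarrow> dist x y < \<epsilon>"
  shows "controlled A"
proof -
  obtain C where "C < \<infinity>"
    and C: "\<And>u \<psi>. admissible u \<psi> \<Longrightarrow>
      (\<integral>\<^sup>+ y \<in> B \<inter> \<Omega>. ennreal (\<bar>u y\<bar> powr p) \<partial>M) \<le> C * energy u \<psi>"
    using \<open>controlled (B \<inter> \<Omega>)\<close> unfolding controlled_def by blast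
  define X where "X = ennreal (2 powr p) * emeasure M (space M) * (C + 2)"
  have "(\<integral>\<^sup>+ x \<in> A. ennreal (\<bar>u x\<bar> powr p) \<partial>M) \<le> X / emeasure M B * energy u \<psi>"
    if adm: "admissible u \<psi>" for u \<psi>
  proof -
    let ?w = "extend u \<psi>"
    have K: "(\<integral>\<^sup>+ y \<in> B. ennreal (\<bar>?w y\<bar> powr p) \<partial>M) \<le> C * energy u \<psi> + energy u \<psi>"
      using nn_integral_extend_le[OF adm B] C[OF adm] by (meson add_right_mono order_trans)
    have "emeasure M B * (\<integral>\<^sup>+ x \<in> A. ennreal (\<bar>u x\<bar> powr p) \<partial>M)
        \<le> ennreal (2 powr p) * emeasure M (space M) *
           (energy u \<psi> + (\<integral>\<^sup>+ y \<in> B. ennreal (\<bar>?w y\<bar> powr p) \<partial>M))"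
      by (rule emeasure_mult_mass_le_energy[OF adm A B near])
    also have "\<dots> \<le> ennreal (2 powr p) * emeasure M (space M) *
        (energy u \<psi> + (C * energy u \<psi> + energy u \<psi>))"
      by (intro mult_left_mono add_left_mono K) simp_all
    also have "energy u \<psi> + (C * energy u \<psi> + energy u \<psi>) = (C + 2) * energy u \<psi>"
      by (simp add: distrib_right mult_2 add_ac)
    finally have "emeasure M B * (\<integral>\<^sup>+ x \<in> A. ennreal (\<bar>u x\<bar> powr p) \<partial>M) \<le> X * energy u \<psi>"
      by (simp add: X_def mult.assoc)
    then have "(emeasure M B * (\<integral>\<^sup>+ x \<in> A. ennreal (\<bar>u x\<bar> powr p) \<partial>M)) / emeasure M B
        \<le> X * energy u \<psi> / emeasure M B"
      by (rule divide_right_mono_ennreal)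
    then show ?thesis
      using \<open>0 < emeasure M B\<close>
      by (simp add: mult.commute[of "emeasure M B"] mult_divide_eq_ennreal ennreal_divide_times
          ennreal_times_divide emeasure_finite)
  qed
  moreover have "X / emeasure M B < \<infinity>"
    using \<open>C < \<infinity>\<close> \<open>0 < emeasure M B\<close>
    by (simp add: X_def ennreal_divide_eq_top_iff ennreal_mult_eq_top_iff less_top[symmetric]
        zero_less_iff_neq_zero)
  ultimately show ?thesis
    unfolding controlled_def by blast
qed

lemma ball_diff_subset_m_boundary:
  assumes "0 < emeasure M (ball z \<delta> \<inter> \<Omega>)" "r + \<delta> \<le> \<epsilon>"
  shows "ball z r - \<Omega> \<subseteq> \<Gamma>"
proof
  fix y
  assume y: "y \<in> ball z r - \<Omega>"
  then have "ball z \<delta> \<subseteq> ball y \<epsilon>"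
    using \<open>r + \<delta> \<le> \<epsilon>\<close> unfolding subset_eq Diff_iff mem_ball by metric
  then have "ball z \<delta> \<inter> \<Omega> \<subseteq> \<Omega> \<inter> ball y \<epsilon>"
    by blast
  then have "0 < emeasure M (\<Omega> \<inter> ball y \<epsilon>)"
    using assms(1) emeasure_mono[of "ball z \<delta> \<inter> \<Omega>" "\<Omega> \<inter> ball y \<epsilon>" M] by simp
  with y show "y \<in> \<Gamma>"
    unfolding m_boundary_eq by simp
qed

lemma emeasure_pos_if_not_controlled:
  assumes "\<not> controlled A" "A \<in> sets M"
  shows "0 < emeasure M A"
  using assms controlled_null by (metis not_gr_zero null_setsI)

lemma null_sets_ball_diff_if_not_controlled:
  assumes "\<not> controlled (ball z \<delta> \<inter> \<Omega>)"
  shows "ball z (\<epsilon> - \<delta>) - \<Omega> \<in> null_sets M"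
proof -
  have pos: "0 < emeasure M (ball z \<delta> \<inter> \<Omega>)"
    using emeasure_pos_if_not_controlled[OF assms] by simp
  have null: "\<Gamma> \<inter> ball z (\<epsilon> - \<delta>) \<in> null_sets M"
  proof (rule ccontr)
    assume "\<Gamma> \<inter> ball z (\<epsilon> - \<delta>) \<notin> null_sets M"
    then have pos': "0 < emeasure M (\<Gamma> \<inter> ball z (\<epsilon> - \<delta>))"
      by (simp add: null_sets_def zero_less_iff_neq_zero)
    have "(\<Gamma> \<inter> ball z (\<epsilon> - \<delta>)) \<inter> \<Omega> = {}"
      by (auto simp: m_boundary_def)
    then have controlled_empty: "controlled ((\<Gamma> \<inter> ball z (\<epsilon> - \<delta>)) \<inter> \<Omega>)"
      by (simp add: controlled_null)
    have near: "dist x y < \<epsilon>" if "x \<in> ball z \<delta> \<inter> \<Omega>" "y \<in> \<Gamma> \<inter> ball z (\<epsilon> - \<delta>)" for x y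
      using that unfolding Int_iff mem_ball by metric
    have "controlled (ball z \<delta> \<inter> \<Omega>)"
      by (rule controlled_if_near_controlled[OF _ _ _ _ pos' controlled_empty near]) auto
    with assms show False ..
  qed
  moreover have "ball z (\<epsilon> - \<delta>) - \<Omega> \<subseteq> \<Gamma>"
    using ball_diff_subset_m_boundary[OF pos] by simp
  ultimately show ?thesis
    by (intro null_sets_subset[OF null]) auto
qed

lemma not_controlled_propagates:
  assumes "\<not> controlled (ball z \<delta> \<inter> \<Omega>)" "0 < \<delta>" "dist z z' < \<epsilon> - 2 * \<delta>"
  shows "\<not> controlled (ball z' \<delta> \<inter> \<Omega>)"
proof
  assume controlled': "controlled (ball z' \<delta> \<inter> \<Omega>)"
  have "ball z' \<delta> \<subseteq> ball z (\<epsilon> - \<delta>)"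
    using assms(3) unfolding subset_eq mem_ball by metric
  then have "ball z' \<delta> - \<Omega> \<in> null_sets M"
    by (intro null_sets_subset[OF null_sets_ball_diff_if_not_controlled[OF assms(1)]]) auto
  then have "emeasure M (ball z' \<delta> \<inter> \<Omega>) = emeasure M (ball z' \<delta>)"
    using emeasure_Diff_null_set[of "ball z' \<delta> - \<Omega>" M "ball z' \<delta>"] by (simp add: Diff_Diff_Int)
  then have pos: "0 < emeasure M (ball z' \<delta> \<inter> \<Omega>)"
    using emeasure_ball_pos[OF \<open>0 < \<delta>\<close>] by simp
  have near: "dist x y < \<epsilon>" if "x \<in> ball z \<delta> \<inter> \<Omega>" "y \<in> ball z' \<delta> \<inter> \<Omega>" for x y
    using that assms(3) unfolding Int_iff mem_ball by metric
  have "controlled (ball z \<delta> \<inter> \<Omega>)"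
    by (rule controlled_if_near_controlled[OF _ _ _ _ pos _ near])
       (auto simp: Int_assoc controlled')
  with assms(1) show False ..
qed

lemma controlled_ball_Int_if_cover:
  assumes "0 < \<delta>" "4 * \<delta> < \<epsilon>" "finite Z" "\<Omega> \<subseteq> ball x R"
    and cover: "ball x (R + \<epsilon>) \<subseteq> (\<Union>z\<in>Z. ball z \<delta>)"
    and "z \<in> Z"
  shows "controlled (ball z \<delta> \<inter> \<Omega>)"
proof (rule ccontr)
  define K where "K = {z \<in> Z. \<not> controlled (ball z \<delta> \<inter> \<Omega>)}"
  assume "\<not> controlled (ball z \<delta> \<inter> \<Omega>)"
  with \<open>z \<in> Z\<close> have "K \<noteq> {}"
    by (auto simp: K_def)
  have spread: "ball z (\<epsilon> - 3 * \<delta>) \<subseteq> (\<Union>z'\<in>K. ball z' \<delta>)" if "z \<in> K" for z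
  proof
    fix y
    assume y: "y \<in> ball z (\<epsilon> - 3 * \<delta>)"
    have bad: "\<not> controlled (ball z \<delta> \<inter> \<Omega>)"
      using that by (simp add: K_def)
    then have "ball z \<delta> \<inter> \<Omega> \<noteq> {}"
      using controlled_null[of "{}"] by auto
    then obtain w where "w \<in> ball z \<delta>" "w \<in> ball x R"
      using \<open>\<Omega> \<subseteq> ball x R\<close> by blast
    then have "y \<in> ball x (R + \<epsilon>)"
      using y \<open>0 < \<delta>\<close> unfolding mem_ball by metric
    then obtain z' where "z' \<in> Z" "dist z' y < \<delta>"
      using cover by force
    moreover have "dist z z' < \<epsilon> - 2 * \<delta>"
      using y \<open>dist z' y < \<delta>\<close> unfolding mem_ball by metric
    then have "\<not> controlled (ball z' \<delta> \<inter> \<Omega>)"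
      by (rule not_controlled_propagates[OF bad \<open>0 < \<delta>\<close>])
    ultimately show "y \<in> (\<Union>z'\<in>K. ball z' \<delta>)"
      by (auto simp: K_def)
  qed
  have "finite K"
    using \<open>finite Z\<close> by (simp add: K_def)
  then have "(\<Union>z\<in>K. ball z \<delta>) = UNIV"
    using connected_UNIV \<open>K \<noteq> {}\<close> \<open>0 < \<delta>\<close> \<open>4 * \<delta> < \<epsilon>\<close> spread
    by (intro UN_balls_eq_UNIV_if_connected[where R = "\<epsilon> - 3 * \<delta>"]) auto
  moreover have "ball z \<delta> \<subseteq> ball z (\<epsilon> - \<delta>)" for z
    using \<open>0 < \<delta>\<close> \<open>4 * \<delta> < \<epsilon>\<close> by (intro subset_ball) linarith
  ultimately have "space M - \<Omega> \<subseteq> (\<Union>z\<in>K. ball z (\<epsilon> - \<delta>) - \<Omega>)"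
    by blast
  moreover have null: "(\<Union>z\<in>K. ball z (\<epsilon> - \<delta>) - \<Omega>) \<in> null_sets M"
    using \<open>finite K\<close>
    by (intro null_sets_UN' null_sets_ball_diff_if_not_controlled)
       (auto simp: K_def countable_finite)
  ultimately have "space M - \<Omega> \<in> null_sets M"
    using sets.Diff[OF sets.top sets_\<Omega>] by (intro null_sets_subset[OF null]) auto
  then have "emeasure M (space M - (space M - \<Omega>)) = emeasure M (space M)"
    by (rule emeasure_Diff_null_set[OF _ sets.top])
  then have "emeasure M (space M) = emeasure M \<Omega>"
    by (simp add: Diff_Diff_Int)
  with emeasure_\<Omega>_less show False
    by simp
qed

lemma controlled_\<Omega>: "controlled \<Omega>"
proof -
  obtain x R where "\<Omega> \<subseteq> ball x R"
    using bounded_subset_ballD[OF bounded_\<Omega>] by blast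
  define \<delta> where "\<delta> = \<epsilon> / 5"
  have "0 < \<delta>" "4 * \<delta> < \<epsilon>"
    using eps_pos by (simp_all add: \<delta>_def)
  obtain Z where "finite Z" and Z: "ball x (R + \<epsilon>) \<subseteq> (\<Union>z\<in>Z. ball z \<delta>)"
    using bounded_imp_totally_bounded[OF bounded_ball[of x "R + \<epsilon>"]] \<open>0 < \<delta>\<close>
    unfolding totally_bounded_metric ball_def[symmetric] by blast
  have "ball x R \<subseteq> ball x (R + \<epsilon>)"
    using eps_pos by (simp add: subset_ball)
  then have "\<Omega> = (\<Union>z\<in>Z. ball z \<delta> \<inter> \<Omega>)"
    using Z \<open>\<Omega> \<subseteq> ball x R\<close> by blast
  moreover have "controlled (\<Union>z\<in>Z. ball z \<delta> \<inter> \<Omega>)"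
  proof (rule controlled_UN)
    show "controlled (ball z \<delta> \<inter> \<Omega>)" if "z \<in> Z" for z
      by (rule controlled_ball_Int_if_cover[OF \<open>0 < \<delta>\<close> \<open>4 * \<delta> < \<epsilon>\<close> \<open>finite Z\<close>
            \<open>\<Omega> \<subseteq> ball x R\<close> Z that])
  qed (use \<open>finite Z\<close> in auto)
  ultimately show ?thesis
    by simp
qed

lemma poincare_ineq: "poincare_ineq M \<epsilon> p \<Omega>"
proof -
  obtain C where "C < \<infinity>"
    and C: "\<And>u \<psi>. admissible u \<psi> \<Longrightarrow> (\<integral>\<^sup>+ x \<in> \<Omega>. ennreal (\<bar>u x\<bar> powr p) \<partial>M) \<le> C * energy u \<psi>"
    using controlled_\<Omega> unfolding controlled_def by blast
  define lam where "lam = 1 / (enn2real C + 1)"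
  have pos: "0 < enn2real C + 1"
    using enn2real_nonneg[of C] by linarith
  then have "0 < lam"
    by (simp add: lam_def)
  have "ennreal lam * C = ennreal (lam * enn2real C)"
    using \<open>C < \<infinity>\<close> \<open>0 < lam\<close> by (simp add: ennreal_mult)
  also have "\<dots> \<le> 1"
    using pos by (simp add: lam_def divide_le_eq_1)
  finally have lamC: "ennreal lam * C \<le> 1" .
  have "ennreal lam * (\<integral>\<^sup>+ x \<in> \<Omega>. ennreal (\<bar>u x\<bar> powr p) \<partial>M) \<le> energy u \<psi>"
    if "Lq_on M p \<Omega> u" "Lq_on M p \<Gamma> \<psi>" for u \<psi>
  proof -
    have "ennreal lam * (\<integral>\<^sup>+ x \<in> \<Omega>. ennreal (\<bar>u x\<bar> powr p) \<partial>M) \<le> ennreal lam * C * energy u \<psi>"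
      using C[of u \<psi>] that by (simp add: admissible_def Lq_on_def mult.assoc mult_left_mono)
    also have "\<dots> \<le> energy u \<psi>"
      using mult_right_mono[OF lamC, of "energy u \<psi>"] by simp
    finally show ?thesis .
  qed
  with \<open>0 < lam\<close> show ?thesis
    unfolding poincare_ineq_def energy_def by blast
qed

end

theorem mainTheorem10:
  fixes \<nu> :: "'a::polish_space measure" and \<epsilon> :: real and \<Omega> :: "'a set"
  assumes "length_space TYPE('a)"
    and "sets \<nu> = sets borel"
    and "doubling \<nu>"
    and "emeasure \<nu> (space \<nu>) < \<infinity>"
    and "\<epsilon> > 0"
    and "ergodic_rw (completion \<nu>) \<epsilon>"
    and "\<Omega> \<in> sets (completion \<nu>)"
    and "bounded \<Omega>"
    and "0 < emeasure (completion \<nu>) \<Omega>"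
    and "emeasure (completion \<nu>) \<Omega> < emeasure \<nu> (space \<nu>)"
  shows "\<forall>p\<ge>1. poincare_ineq (completion \<nu>) \<epsilon> p \<Omega>"
proof (intro allI impI)
  fix p :: real
  assume "1 \<le> p"
  interpret poincare_setting "completion \<nu>" \<epsilon> p \<Omega>
  proof (intro poincare_setting.intro finite_doubling_measure.intro finite_measureI
      poincare_setting_axioms.intro finite_doubling_measure_axioms.intro)
    show "space (completion \<nu>) = UNIV"
      using sets_eq_imp_space_eq[OF assms(2)] by simp
    show "emeasure (completion \<nu>) (space (completion \<nu>)) \<noteq> \<infinity>"
      using assms(4) by simp
    show "emeasure (completion \<nu>) \<Omega> < emeasure (completion \<nu>) (space (completion \<nu>))"
      using assms(10) by simp
    show "sets borel \<subseteq> sets (completion \<nu>)"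
      using assms(2) by auto
    show "doubling (completion \<nu>)"
      using assms(2,3) by (intro doubling_completion) auto
    show "connected (UNIV::'a set)"
      using assms(1) by (rule length_space_imp_connected_UNIV)
    show "0 < p"
      using \<open>1 \<le> p\<close> by simp
  qed (use assms in simp_all)
  show "poincare_ineq (completion \<nu>) \<epsilon> p \<Omega>"
    by (rule poincare_ineq)
qed

end
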